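(* Assume: (A1) $f(x,y)$ and each component of $g(x,y)$ are convex in $y$ for each fixed $x$, and $f,g$ are twice continuously differentiable; (A2) $Y\subseteq\mathbb{R}^m$ is a compact convex set with $\{y:\exists x\in X \text{ such that } g(x,y)\le 0\}\subseteq\mathrm{int}(Y)$; (A3) $F$ and $G$ are twice continuously differentiable; (R1) for each $x\in X$ there exists $y$ with $g(x,y)<0$. Then for any $\overline{\epsilon}\ge0$, $\lim_{\epsilon\downarrow\overline{\epsilon},\,\mu\downarrow0}\mathcal{C}(\epsilon,\mu)=\mathcal{C}(\overline{\epsilon},0)$, and $\mathcal{C}(\epsilon_1,\mu_1)\supseteq\mathcal{C}(\epsilon_2,\mu_2)$ whenever $\epsilon_1\ge\epsilon_2\ge0$ and $\mu_1\ge\mu_2\ge0$.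
   Context: Let $F:\mathbb{R}^n\times\mathbb{R}^m\to\mathbb{R}$, $f:\mathbb{R}^n\times\mathbb{R}^m\to\mathbb{R}$, $g:\mathbb{R}^n\times\mathbb{R}^m\to\mathbb{R}^p$, $G:\mathbb{R}^n\to\mathbb{R}^q$; vector inequalities componentwise; $X=\{x:G(x)\le0\}$. For $\mu\ge0$, $h_\mu(\lambda,x)=\min_y\{\mu\|y\|^2+f(x,y)+\lambda^{\mathsf T}g(x,y):y\in Y\}$ with $Y$ from (A2), and $\mathcal{C}(\epsilon,\mu)=\{(x,y,\lambda): G(x)\le0,\ g(x,y)\le\epsilon,\ \lambda\ge0,\ f(x,y)-h_\mu(\lambda,x)\le\epsilon\}$. Set limits are in the Painlevé–Kuratowski sense (inner and outer limits coincide with the given set). *)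

theory Defs
  imports "HOL-Analysis.Analysis"
begin

definition C2 :: "('a::real_normed_vector \<Rightarrow> 'b::real_normed_vector) \<Rightarrow> bool" where
  "C2 f \<longleftrightarrow> (\<exists>(f' :: 'a \<Rightarrow> 'a \<Rightarrow>\<^sub>L 'b) (f'' :: 'a \<Rightarrow> 'a \<Rightarrow>\<^sub>L ('a \<Rightarrow>\<^sub>L 'b)).
      (\<forall>z. (f has_derivative blinfun_apply (f' z)) (at z)) \<and>
      (\<forall>z. (f' has_derivative blinfun_apply (f'' z)) (at z)) \<and>
      continuous_on UNIV f'')"

text \<open>Lower-level value function h_mu(lambda, x) (minimum over Y, written as infimum).\<close>

definition h_mu ::
  "(real^'m) set \<Rightarrow> (real^'n \<Rightarrow> real^'m \<Rightarrow> real) \<Rightarrow> (real^'n \<Rightarrow> real^'m \<Rightarrow> real^'p)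
   \<Rightarrow> real \<Rightarrow> real^'p \<Rightarrow> real^'n \<Rightarrow> real" where
  "h_mu Y f g \<mu> l x = (INF y\<in>Y. \<mu> * (norm y)^2 + f x y + l \<bullet> g x y)"

definition Cset ::
  "(real^'m) set \<Rightarrow> (real^'n \<Rightarrow> real^'m \<Rightarrow> real) \<Rightarrow> (real^'n \<Rightarrow> real^'m \<Rightarrow> real^'p)
   \<Rightarrow> (real^'n \<Rightarrow> real^'q) \<Rightarrow> real \<Rightarrow> real \<Rightarrow> ((real^'n) \<times> (real^'m) \<times> (real^'p)) set" where
  "Cset Y f g G \<epsilon> \<mu> = {(x, y, l). (\<forall>j. G x $ j \<le> 0) \<and> (\<forall>i. g x y $ i \<le> \<epsilon>) \<and>
      (\<forall>i. 0 \<le> l $ i) \<and> f x y - h_mu Y f g \<mu> l x \<le> \<epsilon>}"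

text \<open>Painleve-Kuratowski inner and outer limits of a set-valued map along a filter.\<close>
definition inner_limit :: "'p filter \<Rightarrow> ('p \<Rightarrow> 'a::metric_space set) \<Rightarrow> 'a set" where
  "inner_limit F S = {z. \<forall>e>0. eventually (\<lambda>p. \<exists>w\<in>S p. dist z w < e) F}"

definition outer_limit :: "'p filter \<Rightarrow> ('p \<Rightarrow> 'a::metric_space set) \<Rightarrow> 'a set" where
  "outer_limit F S = {z. \<forall>e>0. frequently (\<lambda>p. \<exists>w\<in>S p. dist z w < e) F}"

end

theory Submission
  imports Defs
begin

(* The family C(eps, mu) increases in both
   parameters, since the penalty mu |y|^2 raises the value function.  Conversely, if |y| <= B on Y
   then h_mu <= h_0 + mu B^2, so C(eps, mu) is contained in C(eps + mu B^2, 0).  As an infimum of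
   continuous functions h_0 is upper semicontinuous, hence every C(eps, 0) is closed, and
   C(eps0, 0) is the intersection of the C(eps, 0) with eps > eps0.  So near (eps0, 0) the sets
   C(eps, mu) are squeezed between C(eps0, 0) and closed sets shrinking to it, which forces both
   set limits. *)

lemma inner_limit_subset_outer_limit:
  assumes "F \<noteq> bot"
  shows "inner_limit F S \<subseteq> outer_limit F S"
  unfolding inner_limit_def outer_limit_def using eventually_frequently[OF assms] by blast

lemma subset_inner_limit:
  assumes "eventually (\<lambda>p. A \<subseteq> S p) F"
  shows "A \<subseteq> inner_limit F S"
  unfolding inner_limit_def
proof (intro subsetI CollectI allI impI)
  fix z and e :: real
  assume "z \<in> A" "e > 0"
  show "eventually (\<lambda>p. \<exists>w\<in>S p. dist z w < e) F"
    using assms by eventually_elim (use \<open>z \<in> A\<close> \<open>e > 0\<close> in force)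
qed

lemma outer_limit_subset_closed:
  assumes "closed K" and "eventually (\<lambda>p. S p \<subseteq> K) F"
  shows "outer_limit F S \<subseteq> K"
proof
  fix z assume z: "z \<in> outer_limit F S"
  show "z \<in> K"
  proof (rule ccontr)
    assume "z \<notin> K"
    then obtain r where "r > 0" and r: "\<And>w. dist z w < r \<Longrightarrow> w \<notin> K"
      using \<open>closed K\<close> unfolding closed_def open_dist by (metis Compl_iff dist_commute)
    have "eventually (\<lambda>p. \<not> (\<exists>w\<in>S p. dist z w < r)) F"
      using assms(2) by eventually_elim (use r in blast)
    moreover have "frequently (\<lambda>p. \<exists>w\<in>S p. dist z w < r) F"
      using z \<open>r > 0\<close> unfolding outer_limit_def by blast
    ultimately show False by (simp add: frequently_def)
  qed
qed

lemma inner_outer_limit_eq_if_squeezed: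
  assumes "F \<noteq> bot" and "eventually (\<lambda>p. A \<subseteq> S p) F"
    and "\<And>K. K \<in> \<K> \<Longrightarrow> closed K" and "\<And>K. K \<in> \<K> \<Longrightarrow> eventually (\<lambda>p. S p \<subseteq> K) F"
    and "\<Inter>\<K> \<subseteq> A"
  shows "inner_limit F S = A \<and> outer_limit F S = A"
proof -
  have "outer_limit F S \<subseteq> \<Inter>\<K>"
    using outer_limit_subset_closed assms(3,4) by blast
  thus ?thesis
    using subset_inner_limit[OF assms(2)] inner_limit_subset_outer_limit[OF assms(1)] assms(5)
    by blast
qed

lemma C2_imp_continuous_on: "C2 h \<Longrightarrow> continuous_on UNIV h"
  unfolding C2_def
  by (auto simp: continuous_on_eq_continuous_at intro: has_derivative_continuous)

lemma continuous_on_case_prod_compose: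
  assumes "continuous_on UNIV (\<lambda>(x, y). f x y)" "continuous_on UNIV a" "continuous_on UNIV b"
  shows "continuous_on UNIV (\<lambda>w. f (a w) (b w))"
  using continuous_on_compose2[OF assms(1) continuous_on_Pair[OF assms(2,3)]] by auto

lemma closed_Collect_le_INF:
  fixes a :: "'a::topological_space \<Rightarrow> real"
  assumes "continuous_on UNIV a" and "\<And>y. y \<in> Y \<Longrightarrow> continuous_on UNIV (\<lambda>w. b w y)"
    and "\<And>w. bdd_below (b w ` Y)"
  shows "closed {w. a w \<le> (INF y\<in>Y. b w y)}"
proof (cases "Y = {}")
  case True
  thus ?thesis using assms(1) by (simp add: closed_Collect_le)
next
  case False
  have "{w. a w \<le> (INF y\<in>Y. b w y)} = (\<Inter>y\<in>Y. {w. a w \<le> b w y})"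
    using False assms(3) by (auto simp: le_cINF_iff)
  thus ?thesis
    using assms(1,2) by (auto intro!: closed_INT closed_Collect_le)
qed

context
  fixes f :: "real^'n \<Rightarrow> real^'m \<Rightarrow> real"
    and g :: "real^'n \<Rightarrow> real^'m \<Rightarrow> real^'p"
    and Y :: "(real^'m) set"
  assumes f_cont: "continuous_on UNIV (\<lambda>(x, y). f x y)"
    and g_cont: "continuous_on UNIV (\<lambda>(x, y). g x y)"
    and Y_compact: "compact Y"
begin

lemma bdd_below_h_mu_objective:
  "bdd_below ((\<lambda>y. \<mu> * (norm y)^2 + f x y + l \<bullet> g x y) ` Y)"
proof -
  have "continuous_on UNIV (\<lambda>y. \<mu> * (norm y)^2 + f x y + l \<bullet> g x y)"
    by (intro continuous_intros continuous_on_case_prod_compose[OF f_cont]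
        continuous_on_case_prod_compose[OF g_cont])
  hence "compact ((\<lambda>y. \<mu> * (norm y)^2 + f x y + l \<bullet> g x y) ` Y)"
    by (intro compact_continuous_image Y_compact) (auto intro: continuous_on_subset)
  thus ?thesis by (intro bounded_imp_bdd_below compact_imp_bounded)
qed

lemma h_mu_mono:
  assumes "\<mu> \<le> \<mu>'"
  shows "h_mu Y f g \<mu> l x \<le> h_mu Y f g \<mu>' l x"
proof (cases "Y = {}")
  case True thus ?thesis by (simp add: h_mu_def)
next
  case False
  show ?thesis unfolding h_mu_def
  proof (rule cINF_mono[OF False bdd_below_h_mu_objective])
    fix y assume "y \<in> Y"
    have "\<mu> * (norm y)^2 \<le> \<mu>' * (norm y)^2" using assms by (intro mult_right_mono) auto
    thus "\<exists>y'\<in>Y. \<mu> * (norm y')^2 + f x y' + l \<bullet> g x y' \<le> \<mu>' * (norm y)^2 + f x y + l \<bullet> g x y"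
      using \<open>y \<in> Y\<close> by force
  qed
qed

lemma h_mu_le_h_mu_zero:
  assumes B: "\<And>y. y \<in> Y \<Longrightarrow> norm y \<le> B" and "0 \<le> \<mu>"
  shows "h_mu Y f g \<mu> l x \<le> h_mu Y f g 0 l x + \<mu> * B^2"
proof (cases "Y = {}")
  case True thus ?thesis using \<open>0 \<le> \<mu>\<close> by (simp add: h_mu_def)
next
  case False
  have "h_mu Y f g \<mu> l x - \<mu> * B^2 \<le> 0 * (norm y)^2 + f x y + l \<bullet> g x y" if "y \<in> Y" for y
  proof -
    have "h_mu Y f g \<mu> l x \<le> \<mu> * (norm y)^2 + f x y + l \<bullet> g x y"
      unfolding h_mu_def by (rule cINF_lower[OF bdd_below_h_mu_objective that])
    moreover have "\<mu> * (norm y)^2 \<le> \<mu> * B^2"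
      using B[OF that] \<open>0 \<le> \<mu>\<close> by (intro mult_left_mono power_mono) auto
    ultimately show ?thesis by simp
  qed
  hence "h_mu Y f g \<mu> l x - \<mu> * B^2 \<le> h_mu Y f g 0 l x"
    unfolding h_mu_def[of Y f g 0] by (rule cINF_greatest[OF False])
  thus ?thesis by simp
qed

lemma Cset_mono:
  assumes "\<epsilon> \<le> \<epsilon>'" and "\<mu> \<le> \<mu>'"
  shows "Cset Y f g G \<epsilon> \<mu> \<subseteq> Cset Y f g G \<epsilon>' \<mu>'"
  using assms h_mu_mono[OF assms(2)] by (auto simp: Cset_def intro: order_trans) (smt (verit))

lemma Cset_subset_Cset_zero:
  assumes "\<And>y. y \<in> Y \<Longrightarrow> norm y \<le> B" and "0 \<le> \<mu>"
  shows "Cset Y f g G \<epsilon> \<mu> \<subseteq> Cset Y f g G (\<epsilon> + \<mu> * B^2) 0"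
proof -
  have "h_mu Y f g \<mu> l x \<le> h_mu Y f g 0 l x + \<mu> * B^2" for l x
    using assms by (rule h_mu_le_h_mu_zero)
  moreover have "0 \<le> \<mu> * B^2" using \<open>0 \<le> \<mu>\<close> by simp
  ultimately show ?thesis
    by (auto simp: Cset_def intro: order_trans) (smt (verit))
qed

lemma closed_Cset_zero:
  assumes G_cont: "continuous_on UNIV G"
  shows "closed (Cset Y f g G \<epsilon> 0)"
proof -
  let ?x = "\<lambda>w::(real^'n) \<times> (real^'m) \<times> (real^'p). fst w"
  let ?y = "\<lambda>w::(real^'n) \<times> (real^'m) \<times> (real^'p). fst (snd w)"
  let ?l = "\<lambda>w::(real^'n) \<times> (real^'m) \<times> (real^'p). snd (snd w)"
  have x: "continuous_on UNIV ?x" and y: "continuous_on UNIV ?y" and l: "continuous_on UNIV ?l"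
    by (intro continuous_intros)+
  have "Cset Y f g G \<epsilon> 0 =
      {w. \<forall>j. G (?x w) $ j \<le> 0} \<inter> {w. \<forall>i. g (?x w) (?y w) $ i \<le> \<epsilon>} \<inter> {w. \<forall>i. 0 \<le> ?l w $ i}
      \<inter> {w. f (?x w) (?y w) - \<epsilon> \<le> (INF y'\<in>Y. 0 * (norm y')^2 + f (?x w) y' + ?l w \<bullet> g (?x w) y')}"
    by (auto simp: Cset_def h_mu_def)
  moreover have "closed {w. \<forall>j. G (?x w) $ j \<le> 0}"
    using continuous_on_compose2[OF G_cont x]
    by (auto intro!: closed_Collect_all closed_Collect_le continuous_on_component)
  moreover have "closed {w. \<forall>i. g (?x w) (?y w) $ i \<le> \<epsilon>}"
    by (intro closed_Collect_all closed_Collect_le continuous_intros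
        continuous_on_case_prod_compose[OF g_cont x y])
  moreover have "closed {w. \<forall>i. 0 \<le> ?l w $ i}"
    by (intro closed_Collect_all closed_Collect_le continuous_intros)
  moreover have "closed {w. f (?x w) (?y w) - \<epsilon>
      \<le> (INF y'\<in>Y. 0 * (norm y')^2 + f (?x w) y' + ?l w \<bullet> g (?x w) y')}"
    by (intro closed_Collect_le_INF bdd_below_h_mu_objective continuous_intros
        continuous_on_case_prod_compose[OF f_cont x y] continuous_on_case_prod_compose[OF f_cont x]
        continuous_on_case_prod_compose[OF g_cont x])
  ultimately show ?thesis by (simp add: closed_Int)
qed

end

lemma Inter_Cset_greater_subset: "(\<Inter>\<epsilon>\<in>{a<..}. Cset Y f g G \<epsilon> \<mu>) \<subseteq> Cset Y f g G a \<mu>"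
proof
  fix w assume "w \<in> (\<Inter>\<epsilon>\<in>{a<..}. Cset Y f g G \<epsilon> \<mu>)"
  hence mem: "\<And>e. a < e \<Longrightarrow> w \<in> Cset Y f g G e \<mu>" by blast
  show "w \<in> Cset Y f g G a \<mu>"
    using mem mem[of "a + 1"] by (cases w) (auto simp: Cset_def intro: dense_ge)
qed

lemma at_corner_within_quadrant_neq_bot:
  "at (a::real, 0::real) within {(e, m). a \<le> e \<and> 0 \<le> m} \<noteq> bot"
proof -
  have "(a, 0) islimpt {(e, m). a \<le> e \<and> (0::real) \<le> m}"
    unfolding islimpt_approachable
  proof (intro allI impI)
    fix r :: real assume "r > 0"
    thus "\<exists>p\<in>{(e, m). a \<le> e \<and> (0::real) \<le> m}. p \<noteq> (a, 0) \<and> dist p (a, 0) < r"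
      by (intro bexI[of _ "(a + r/2, 0)"]) (auto simp: dist_Pair_Pair dist_real_def)
  qed
  thus ?thesis by (simp add: trivial_limit_within)
qed

lemma eventually_at_corner_within_quadrant:
  assumes "a < b"
  shows "eventually (\<lambda>(e, m). a \<le> e \<and> 0 \<le> m \<and> e + m * c < b)
           (at (a::real, 0::real) within {(e, m). a \<le> e \<and> 0 \<le> m})"
proof -
  have "((\<lambda>p. fst p + snd p * c) \<longlongrightarrow> a + 0 * c) (at (a, 0) within {(e, m). a \<le> e \<and> 0 \<le> m})"
    using tendsto_fst[OF tendsto_ident_at] tendsto_snd[OF tendsto_ident_at]
    by (intro tendsto_intros) (auto simp del: tendsto_ident_at)
  hence "eventually (\<lambda>p. fst p + snd p * c < b) (at (a, 0) within {(e, m). a \<le> e \<and> 0 \<le> m})"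
    using assms by (auto dest: order_tendstoD(2))
  moreover have "eventually (\<lambda>p. p \<in> {(e, m). a \<le> e \<and> 0 \<le> m})
      (at (a, 0) within {(e, m). a \<le> e \<and> (0::real) \<le> m})"
    by (simp add: eventually_at_filter)
  ultimately show ?thesis
    by eventually_elim auto
qed

lemma Cset_limits_at_corner:
  fixes f :: "real^'n \<Rightarrow> real^'m \<Rightarrow> real"
    and g :: "real^'n \<Rightarrow> real^'m \<Rightarrow> real^'p"
    and G :: "real^'n \<Rightarrow> real^'q"
    and a :: real
  assumes f_cont: "continuous_on UNIV (\<lambda>(x, y). f x y)"
    and g_cont: "continuous_on UNIV (\<lambda>(x, y). g x y)"
    and G_cont: "continuous_on UNIV G"
    and Y_compact: "compact Y"
  defines "FF \<equiv> at (a, 0) within {(e, m). a \<le> e \<and> 0 \<le> m}"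
  shows "inner_limit FF (\<lambda>(e, m). Cset Y f g G e m) = Cset Y f g G a 0
    \<and> outer_limit FF (\<lambda>(e, m). Cset Y f g G e m) = Cset Y f g G a 0"
proof (rule inner_outer_limit_eq_if_squeezed[where \<K> = "(\<lambda>e. Cset Y f g G e 0) ` {a<..}"])
  note cont = f_cont g_cont Y_compact
  obtain B where B: "\<And>y. y \<in> Y \<Longrightarrow> norm y \<le> B"
    using compact_imp_bounded[OF Y_compact] by (auto simp: bounded_iff)
  show "FF \<noteq> bot" unfolding FF_def by (rule at_corner_within_quadrant_neq_bot)
  show "eventually (\<lambda>p. Cset Y f g G a 0 \<subseteq> (\<lambda>(e, m). Cset Y f g G e m) p) FF"
    using eventually_at_corner_within_quadrant[OF less_add_one, where c = 0] unfolding FF_def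
    by eventually_elim (auto intro: Cset_mono[OF cont, THEN subsetD])
  show "closed K" if "K \<in> (\<lambda>e. Cset Y f g G e 0) ` {a<..}" for K
    using that closed_Cset_zero[OF cont G_cont] by blast
  show "eventually (\<lambda>p. (\<lambda>(e, m). Cset Y f g G e m) p \<subseteq> K) FF"
    if "K \<in> (\<lambda>e. Cset Y f g G e 0) ` {a<..}" for K
  proof -
    from that obtain b where "a < b" and K: "K = Cset Y f g G b 0" by auto
    show ?thesis
      using eventually_at_corner_within_quadrant[OF \<open>a < b\<close>, of "B^2"] unfolding FF_def
    proof eventually_elim
      case (elim p)
      then obtain e m where p: "p = (e, m)" "0 \<le> m" "e + m * B^2 < b" by auto
      have "Cset Y f g G e m \<subseteq> Cset Y f g G (e + m * B^2) 0"
        using Cset_subset_Cset_zero[OF cont B p(2)] .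
      also have "\<dots> \<subseteq> K"
        unfolding K using p(3) by (intro Cset_mono[OF cont]) auto
      finally show ?case using p(1) by simp
    qed
  qed
  show "\<Inter> ((\<lambda>e. Cset Y f g G e 0) ` {a<..}) \<subseteq> Cset Y f g G a 0"
    by (rule Inter_Cset_greater_subset)
qed

theorem proposition6:
  fixes F :: "real^'n \<Rightarrow> real^'m \<Rightarrow> real"
    and f :: "real^'n \<Rightarrow> real^'m \<Rightarrow> real"
    and g :: "real^'n \<Rightarrow> real^'m \<Rightarrow> real^'p"
    and G :: "real^'n \<Rightarrow> real^'q"
    and Y :: "(real^'m) set"
    and X :: "(real^'n) set"
    and \<epsilon>bar :: real
  assumes X_def: "X = {x. \<forall>j. G x $ j \<le> 0}"
    and A1_conv_f: "\<And>x. convex_on UNIV (\<lambda>y. f x y)"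
    and A1_conv_g: "\<And>x i. convex_on UNIV (\<lambda>y. g x y $ i)"
    and A1_C2_f: "C2 (\<lambda>(x, y). f x y)"
    and A1_C2_g: "C2 (\<lambda>(x, y). g x y)"
    and A2_compact: "compact Y"
    and A2_convex: "convex Y"
    and A2_int: "{y. \<exists>x\<in>X. \<forall>i. g x y $ i \<le> 0} \<subseteq> interior Y"
    and A3_F: "C2 (\<lambda>(x, y). F x y)"
    and A3_G: "C2 G"
    and R1: "\<And>x. x \<in> X \<Longrightarrow> \<exists>y. \<forall>i. g x y $ i < 0"
    and eps: "\<epsilon>bar \<ge> 0"
  shows "inner_limit (at (\<epsilon>bar, 0) within {(e, m). \<epsilon>bar \<le> e \<and> 0 \<le> m})
             (\<lambda>(e, m). Cset Y f g G e m) = Cset Y f g G \<epsilon>bar 0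
       \<and> outer_limit (at (\<epsilon>bar, 0) within {(e, m). \<epsilon>bar \<le> e \<and> 0 \<le> m})
             (\<lambda>(e, m). Cset Y f g G e m) = Cset Y f g G \<epsilon>bar 0
       \<and> (\<forall>\<epsilon>1 \<epsilon>2 \<mu>1 \<mu>2. \<epsilon>1 \<ge> \<epsilon>2 \<and> \<epsilon>2 \<ge> 0 \<and> \<mu>1 \<ge> \<mu>2 \<and> \<mu>2 \<ge> 0 \<longrightarrow>
            Cset Y f g G \<epsilon>2 \<mu>2 \<subseteq> Cset Y f g G \<epsilon>1 \<mu>1)"
proof -
  note cont = C2_imp_continuous_on[OF A1_C2_f] C2_imp_continuous_on[OF A1_C2_g]
  have "\<forall>\<epsilon>1 \<epsilon>2 \<mu>1 \<mu>2. \<epsilon>1 \<ge> \<epsilon>2 \<and> \<epsilon>2 \<ge> 0 \<and> \<mu>1 \<ge> \<mu>2 \<and> \<mu>2 \<ge> 0 \<longrightarrow>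
      Cset Y f g G \<epsilon>2 \<mu>2 \<subseteq> Cset Y f g G \<epsilon>1 \<mu>1"
    by (intro allI impI Cset_mono[OF cont A2_compact]) auto
  thus ?thesis
    using Cset_limits_at_corner[OF cont C2_imp_continuous_on[OF A3_G] A2_compact] by blast
qed

end
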